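(* For every BST $T$ and every set $F$ of nodes of $T$ containing the root of $T$, the intervals in the extended hand $E(T,F)$ are pairwise disjoint.
   Context: Let $T$ be a BST and $F$ a set of nodes (fingers) including the root. $S(T,F)$ is the Steiner tree of $F$ in $T$ (the minimal connected subtree containing $F$). The set of pseudofingers $P(T,F)$ consists of $F$ together with all nodes of degree $3$ in $S(T,F)$. For pseudofingers $x,y$ with $x$ an ancestor of $y$ such that the path between them contains no other pseudofinger, the tendon $\tau_{x,y}$ is the set of nodes strictly between $x$ and $y$ on this path. Its half tendons are $\tau^{<}_{x,y}=\{z\in\tau_{x,y}: z<y\}$ and $\tau^{>}_{x,y}=\{z\in\tau_{x,y}:z>y\}$; $H(T,F)$ is the set of all (nonempty) half tendons. A half tendon $\tau$ is identified with the interval $[\min\tau,\max\tau]$ of keys and a pseudofinger $f$ with $[f,f]$. The extended hand is $E(T,F)=P(T,F)\cup H(T,F)$, viewed as a set of intervals. *)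

theory Defs
  imports Main "HOL-Library.Tree"
begin

text \<open>Nodes of a BST are identified with their (distinct) keys.\<close>

fun anc :: "'a tree \<Rightarrow> 'a \<Rightarrow> 'a \<Rightarrow> bool" where
  "anc Leaf a b = False"
| "anc (Node l x r) a b =
     ((a = x \<and> b \<in> set_tree (Node l x r)) \<or> anc l a b \<or> anc r a b)"

fun tedges :: "'a tree \<Rightarrow> ('a \<times> 'a) set" where
  "tedges Leaf = {}"
| "tedges (Node l x r) =
     {(x, value c) | c. c \<in> {l, r} \<and> c \<noteq> Leaf} \<union> tedges l \<union> tedges r"

text \<open>z lies on the (unique) tree path between nodes u and v.\<close>
definition on_path :: "'a tree \<Rightarrow> 'a \<Rightarrow> 'a \<Rightarrow> 'a \<Rightarrow> bool" where
  "on_path t u v z \<longleftrightarrow> (anc t z u \<or> anc t z v) \<and>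
     (\<forall>w. anc t w u \<and> anc t w v \<longrightarrow> anc t w z)"

text \<open>Node set of the Steiner tree S(T,F): union of paths between fingers.\<close>
definition steiner :: "'a tree \<Rightarrow> 'a set \<Rightarrow> 'a set" where
  "steiner t F = {z. \<exists>u\<in>F. \<exists>v\<in>F. on_path t u v z}"

definition deg_in :: "'a tree \<Rightarrow> 'a set \<Rightarrow> 'a \<Rightarrow> nat" where
  "deg_in t S x = card {y \<in> S. (x, y) \<in> tedges t \<or> (y, x) \<in> tedges t}"

definition pseudofingers :: "'a tree \<Rightarrow> 'a set \<Rightarrow> 'a set" where
  "pseudofingers t F = F \<union> {x \<in> steiner t F. deg_in t (steiner t F) x = 3}"

definition tendon :: "'a tree \<Rightarrow> 'a \<Rightarrow> 'a \<Rightarrow> 'a set" where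
  "tendon t x y = {z. anc t x z \<and> anc t z y \<and> z \<noteq> x \<and> z \<noteq> y}"

definition tendon_pair :: "'a tree \<Rightarrow> 'a set \<Rightarrow> 'a \<Rightarrow> 'a \<Rightarrow> bool" where
  "tendon_pair t F x y \<longleftrightarrow> x \<in> pseudofingers t F \<and> y \<in> pseudofingers t F \<and>
     x \<noteq> y \<and> anc t x y \<and> tendon t x y \<inter> pseudofingers t F = {}"

definition half_tendons :: "('a::linorder) tree \<Rightarrow> 'a set \<Rightarrow> 'a set set" where
  "half_tendons t F =
     {h. h \<noteq> {} \<and> (\<exists>x y. tendon_pair t F x y \<and>
        (h = {z \<in> tendon t x y. z < y} \<or> h = {z \<in> tendon t x y. z > y}))}"

text \<open>Extended hand as a set of key intervals, an interval being the pair
  of its endpoints (closed interval [a,b]).\<close>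
definition extended_hand :: "('a::linorder) tree \<Rightarrow> 'a set \<Rightarrow> ('a \<times> 'a) set" where
  "extended_hand t F =
     (\<lambda>f. (f, f)) ` pseudofingers t F \<union> (\<lambda>h. (Min h, Max h)) ` half_tendons t F"

end

(* The intervals of E(T,F) are the key ranges [min X, max X] of node sets X of the Steiner tree S,
   each a single pseudofinger or a half tendon.  These sets are pairwise disjoint: two different
   tendons through one node would split at a node of degree 3 in S, i.e. at a pseudofinger lying
   inside a tendon.  Each X is moreover convex within S: by the BST order, a node s of S whose key
   lies between two keys of a half tendon of (x, y) descends from that half tendon but not from y,
   and the node where the paths to s and to y split lies inside the tendon, so it is s itself, as
   otherwise it would have degree 3 in S.  Two disjoint sets that are convex within S have
   disjoint key ranges. *)

theory Submission
  imports Defs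
begin

lemma anc_in_set_tree: "anc t a b \<Longrightarrow> a \<in> set_tree t \<and> b \<in> set_tree t"
  by (induction t) auto

lemma anc_refl: "a \<in> set_tree t \<Longrightarrow> anc t a a"
  by (induction t) auto

lemma anc_value: "b \<in> set_tree t \<Longrightarrow> anc t (value t) b"
  by (cases t) auto

lemma bst_Node_separated:
  assumes "bst (Node l x r)"
  shows "x \<notin> set_tree l" "x \<notin> set_tree r" "a \<in> set_tree l \<Longrightarrow> a \<notin> set_tree r"
  using assms less_asym by fastforce+

lemma anc_value_eq: "bst t \<Longrightarrow> anc t a (value t) \<Longrightarrow> a = value t"
  by (cases t) (auto dest: anc_in_set_tree)

lemma anc_trans: "bst t \<Longrightarrow> anc t a b \<Longrightarrow> anc t b c \<Longrightarrow> anc t a c"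
proof (induction t)
  case (Node l x r)
  then show ?case using bst_Node_separated[OF Node.prems(1)] by (auto dest: anc_in_set_tree)
qed simp

lemma anc_antisym: "bst t \<Longrightarrow> anc t a b \<Longrightarrow> anc t b a \<Longrightarrow> a = b"
proof (induction t)
  case (Node l x r)
  then show ?case using bst_Node_separated[OF Node.prems(1)] by (auto dest: anc_in_set_tree)
qed simp

lemma anc_linear: "bst t \<Longrightarrow> anc t a c \<Longrightarrow> anc t b c \<Longrightarrow> anc t a b \<or> anc t b a"
proof (induction t)
  case (Node l x r)
  then show ?case using bst_Node_separated[OF Node.prems(1)] by (auto dest: anc_in_set_tree)
qed simp

lemma anc_Node_left:
  "bst (Node l x r) \<Longrightarrow> a \<in> set_tree l \<Longrightarrow> anc (Node l x r) a b \<longleftrightarrow> anc l a b"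
  using bst_Node_separated by (fastforce dest: anc_in_set_tree)

lemma anc_Node_right:
  "bst (Node l x r) \<Longrightarrow> a \<in> set_tree r \<Longrightarrow> anc (Node l x r) a b \<longleftrightarrow> anc r a b"
  using bst_Node_separated by (fastforce dest: anc_in_set_tree)

lemma anc_same_side:
  "bst t \<Longrightarrow> anc t v y \<Longrightarrow> anc t y s \<Longrightarrow> y \<noteq> v \<Longrightarrow> (y < v \<longleftrightarrow> s < v)"
proof (induction t)
  case (Node l x r)
  show ?case
  proof (cases "v = x")
    case True
    then consider "y \<in> set_tree l" | "y \<in> set_tree r"
      using Node.prems(2,4) anc_in_set_tree[OF Node.prems(2)] by auto
    then show ?thesis
    proof cases
      case 1
      then have "anc l y s" using anc_Node_left[OF Node.prems(1) 1] Node.prems(3) by simp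
      then have "s \<in> set_tree l" using anc_in_set_tree by fast
      then show ?thesis using 1 True Node.prems(1) by simp
    next
      case 2
      then have "anc r y s" using anc_Node_right[OF Node.prems(1) 2] Node.prems(3) by simp
      then have "s \<in> set_tree r" using anc_in_set_tree by fast
      then show ?thesis using 2 True Node.prems(1) by (auto dest: less_asym)
    qed
  next
    case False
    then consider "anc l v y" | "anc r v y" using Node.prems(2) by auto
    then show ?thesis
    proof cases
      case 1
      then have "y \<in> set_tree l" using anc_in_set_tree by fast
      then have "anc l y s" using anc_Node_left[OF Node.prems(1)] Node.prems(3) by simp
      then show ?thesis using 1 Node by simp
    next
      case 2
      then have "y \<in> set_tree r" using anc_in_set_tree by fast
      then have "anc r y s" using anc_Node_right[OF Node.prems(1)] Node.prems(3) by simp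
      then show ?thesis using 2 Node by simp
    qed
  qed
qed simp

lemma anc_between:
  "bst t \<Longrightarrow> anc t p q \<Longrightarrow> s \<in> set_tree t \<Longrightarrow> p \<le> s \<and> s \<le> q \<or> q \<le> s \<and> s \<le> p \<Longrightarrow> anc t p s"
proof (induction t)
  case (Node l x r)
  show ?case
  proof (cases "p = x")
    case False
    then consider "anc l p q" | "anc r p q" using Node.prems(2) by auto
    then show ?thesis
    proof cases
      case 1
      then have "p < x" "q < x" using Node.prems(1) anc_in_set_tree[OF 1] by auto
      then have "s < x" using Node.prems(4) le_less_trans by blast
      then have "s \<in> set_tree l" using Node.prems(1,3) less_asym by auto
      then show ?thesis using Node 1 by simp
    next
      case 2
      then have "x < p" "x < q" using Node.prems(1) anc_in_set_tree[OF 2] by auto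
      then have "x < s" using Node.prems(4) less_le_trans by blast
      then have "s \<in> set_tree r" using Node.prems(1,3) less_asym by auto
      then show ?thesis using Node 2 by simp
    qed
  qed (use Node.prems(3) in simp)
qed simp

lemma anc_lca_exists:
  "bst t \<Longrightarrow> u \<in> set_tree t \<Longrightarrow> v \<in> set_tree t \<Longrightarrow>
   \<exists>w. anc t w u \<and> anc t w v \<and> (\<forall>w'. anc t w' u \<and> anc t w' v \<longrightarrow> anc t w' w)"
proof (induction t)
  case (Node l x r)
  note sep = bst_Node_separated[OF Node.prems(1)]
  consider "u \<in> set_tree l" "v \<in> set_tree l" | "u \<in> set_tree r" "v \<in> set_tree r"
    | "\<not> (u \<in> set_tree l \<and> v \<in> set_tree l)" "\<not> (u \<in> set_tree r \<and> v \<in> set_tree r)"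
    by blast
  then show ?case
  proof cases
    case 1
    then obtain w where "anc l w u \<and> anc l w v \<and> (\<forall>w'. anc l w' u \<and> anc l w' v \<longrightarrow> anc l w' w)"
      using Node by auto
    then show ?thesis using 1 sep by (intro exI[of _ w]) (auto dest: anc_in_set_tree)
  next
    case 2
    then obtain w where "anc r w u \<and> anc r w v \<and> (\<forall>w'. anc r w' u \<and> anc r w' v \<longrightarrow> anc r w' w)"
      using Node by auto
    then show ?thesis using 2 sep by (intro exI[of _ w]) (auto dest: anc_in_set_tree)
  next
    case 3
    then show ?thesis using Node.prems(2,3) sep by (intro exI[of _ x]) (auto dest: anc_in_set_tree)
  qed
qed simp

lemma value_in_set_tree: "t \<noteq> Leaf \<Longrightarrow> value t \<in> set_tree t"
  by (cases t) auto

lemma mem_tedges_Node [simp]: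
  "(a, b) \<in> tedges (Node l x r) \<longleftrightarrow>
     a = x \<and> (l \<noteq> Leaf \<and> b = value l \<or> r \<noteq> Leaf \<and> b = value r) \<or>
     (a, b) \<in> tedges l \<or> (a, b) \<in> tedges r"
  by auto

declare tedges.simps(2) [simp del]

lemma tedges_subset: "tedges t \<subseteq> set_tree t \<times> set_tree t"
  by (induction t) (auto simp: value_in_set_tree)

lemma tedges_anc: "bst t \<Longrightarrow> (a, b) \<in> tedges t \<Longrightarrow> anc t a b \<and> a \<noteq> b"
proof (induction t)
  case (Node l x r)
  consider "a = x" "b \<in> set_tree l \<union> set_tree r" | "(a, b) \<in> tedges l" | "(a, b) \<in> tedges r"
    using Node.prems(2) value_in_set_tree by auto
  then show ?case
  proof cases
    case 1
    then show ?thesis using bst_Node_separated[OF Node.prems(1)] by auto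
  qed (use Node in auto)
qed simp

lemma tedges_parent_exists: "w \<in> set_tree t \<Longrightarrow> w \<noteq> value t \<Longrightarrow> \<exists>p. (p, w) \<in> tedges t"
proof (induction t)
  case (Node l x r)
  have "\<exists>p. (p, w) \<in> tedges (Node l x r)" if "c \<in> {l, r}" "w \<in> set_tree c" for c
  proof (cases "w = value c")
    case True
    then have "(x, w) \<in> tedges (Node l x r)" using that by auto
    then show ?thesis ..
  next
    case False
    then show ?thesis using that Node.IH by auto
  qed
  then show ?case using Node.prems by auto
qed simp

lemma tedges_child_towards: "anc t w u \<Longrightarrow> w \<noteq> u \<Longrightarrow> \<exists>c. (w, c) \<in> tedges t \<and> anc t c u"
proof (induction t)
  case (Node l x r)
  consider "w = x" "u \<in> set_tree l" | "w = x" "u \<in> set_tree r" | "anc l w u" | "anc r w u"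
    using Node.prems by auto
  then show ?case
  proof cases
    case 1
    then show ?thesis using anc_value[of u l] by (intro exI[of _ "value l"]) auto
  next
    case 2
    then show ?thesis using anc_value[of u r] by (intro exI[of _ "value r"]) auto
  next
    case 3
    then show ?thesis using Node by auto
  next
    case 4
    then show ?thesis using Node by auto
  qed
qed simp

lemma tedges_parent_unique: "bst t \<Longrightarrow> (a, m) \<in> tedges t \<Longrightarrow> (b, m) \<in> tedges t \<Longrightarrow> a = b"
proof (induction t)
  case (Node l x r)
  note sep = bst_Node_separated[OF Node.prems(1)]
  have no_parent_of_value: "(c, value s) \<notin> tedges s" if "bst s" for c s
    using tedges_anc[OF that] anc_value_eq[OF that] by blast
  have in_l: "m \<in> set_tree l" if "(c, m) \<in> tedges l" for c
    using that tedges_subset by blast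
  have in_r: "m \<in> set_tree r" if "(c, m) \<in> tedges r" for c
    using that tedges_subset by blast
  consider "l \<noteq> Leaf" "m = value l" | "r \<noteq> Leaf" "m = value r"
    | "(a, m) \<in> tedges l \<or> (a, m) \<in> tedges r" "(b, m) \<in> tedges l \<or> (b, m) \<in> tedges r"
    using Node.prems(2,3) by auto
  then show ?case
  proof cases
    case 1
    then have "m \<notin> set_tree r" using sep value_in_set_tree by blast
    then show ?thesis
      using 1 Node.prems in_r no_parent_of_value[of l] by auto
  next
    case 2
    then have "m \<notin> set_tree l" using sep value_in_set_tree by blast
    then show ?thesis
      using 2 Node.prems in_l no_parent_of_value[of r] by auto
  next
    case 3
    then show ?thesis using Node in_l in_r sep by auto
  qed
qed simp

lemma tedges_child_unique:
  "bst t \<Longrightarrow> (m, a) \<in> tedges t \<Longrightarrow> (m, b) \<in> tedges t \<Longrightarrow> (a < m \<longleftrightarrow> b < m) \<Longrightarrow> a = b"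
proof (induction t)
  case (Node l x r)
  note sep = bst_Node_separated[OF Node.prems(1)]
  have sub_l: "(m, c) \<in> tedges l \<Longrightarrow> m \<in> set_tree l"
   and sub_r: "(m, c) \<in> tedges r \<Longrightarrow> m \<in> set_tree r" for c
    using tedges_subset by blast+
  consider "m = x" | "m \<in> set_tree l" | "m \<in> set_tree r"
    using subsetD[OF tedges_subset Node.prems(2)] by auto
  then show ?case
  proof cases
    case 1
    then have "l \<noteq> Leaf \<and> c = value l \<or> r \<noteq> Leaf \<and> c = value r"
      if "(m, c) \<in> tedges (Node l x r)" for c
      using that sep sub_l sub_r by auto
    moreover have "l \<noteq> Leaf \<Longrightarrow> value l < x" "r \<noteq> Leaf \<Longrightarrow> x < value r"
      using Node.prems(1) value_in_set_tree by auto
    ultimately show ?thesis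
      using 1 Node.prems(2-4) by (metis less_asym)
  next
    case 2
    then have "(m, a) \<in> tedges l" "(m, b) \<in> tedges l"
      using Node.prems(2,3) sep sub_r by auto
    then show ?thesis using Node by simp
  next
    case 3
    then have "(m, a) \<in> tedges r" "(m, b) \<in> tedges r"
      using Node.prems(2,3) sep sub_l by auto
    then show ?thesis using Node by simp
  qed
qed simp

lemma deg_in_le_3:
  assumes "bst t"
  shows "deg_in t S m \<le> 3"
proof -
  define P where "P = {p. (p, m) \<in> tedges t}"
  define L where "L = {c. (m, c) \<in> tedges t \<and> c < m}"
  define R where "R = {c. (m, c) \<in> tedges t \<and> \<not> c < m}"
  have fin: "finite (P \<union> L \<union> R)"
    by (rule finite_subset[of _ "set_tree t"]) (auto simp: P_def L_def R_def dest: subsetD[OF tedges_subset])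
  have "card P \<le> 1"
    using tedges_parent_unique[OF assms] fin by (auto simp: card_le_Suc0_iff_eq P_def)
  moreover have "card L \<le> 1" "card R \<le> 1"
    using tedges_child_unique[OF assms, of m] fin by (auto simp: card_le_Suc0_iff_eq L_def R_def)
  ultimately have "card (P \<union> L \<union> R) \<le> 3"
    using card_Un_le[of "P \<union> L" R] card_Un_le[of P L] by linarith
  moreover have "{y \<in> S. (m, y) \<in> tedges t \<or> (y, m) \<in> tedges t} \<subseteq> P \<union> L \<union> R"
    unfolding P_def L_def R_def by auto
  ultimately show ?thesis
    unfolding deg_in_def using card_mono[OF fin] by (meson order_trans)
qed

lemma deg_in_eq_3:
  assumes "bst t" "(p, m) \<in> tedges t" "(m, c1) \<in> tedges t" "(m, c2) \<in> tedges t" "c1 \<noteq> c2"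
    and "{p, c1, c2} \<subseteq> S"
  shows "deg_in t S m = 3"
proof -
  define N where "N = {y \<in> S. (m, y) \<in> tedges t \<or> (y, m) \<in> tedges t}"
  have "p \<noteq> c" if "(m, c) \<in> tedges t" for c
    using tedges_anc[OF assms(1) assms(2)] tedges_anc[OF assms(1) that] anc_antisym[OF assms(1)]
    by blast
  then have "card {p, c1, c2} = 3" using assms(3-5) by simp
  moreover have "card {p, c1, c2} \<le> card N"
  proof (rule card_mono)
    show "finite N"
      by (rule finite_subset[of _ "set_tree t"]) (auto simp: N_def dest: subsetD[OF tedges_subset])
    show "{p, c1, c2} \<subseteq> N" using assms(2-4,6) by (simp add: N_def)
  qed
  ultimately show ?thesis
    using deg_in_le_3[OF assms(1), of S m] unfolding deg_in_def N_def by linarith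
qed

lemma Min_Max_intervals_disjoint:
  fixes X Y :: "'a::linorder set"
  assumes "finite X" "X \<noteq> {}" "X \<subseteq> S" "finite Y" "Y \<noteq> {}" "Y \<subseteq> S" "X \<inter> Y = {}"
    and convex_X: "\<And>s. s \<in> S \<Longrightarrow> Min X \<le> s \<Longrightarrow> s \<le> Max X \<Longrightarrow> s \<in> X"
    and convex_Y: "\<And>s. s \<in> S \<Longrightarrow> Min Y \<le> s \<Longrightarrow> s \<le> Max Y \<Longrightarrow> s \<in> Y"
  shows "{Min X..Max X} \<inter> {Min Y..Max Y} = {}"
proof (rule ccontr)
  assume "{Min X..Max X} \<inter> {Min Y..Max Y} \<noteq> {}"
  then obtain t where "t \<in> {Min X..Max X}" "t \<in> {Min Y..Max Y}" by blast
  then have t: "Min X \<le> t" "t \<le> Max X" "Min Y \<le> t" "t \<le> Max Y" by auto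
  have "Min X \<in> X" "Min Y \<in> Y" using assms(1,2,4,5) by simp_all
  then have "Min X \<in> S" "Min Y \<in> S" using assms(3,6) by blast+
  have "Min Y \<in> X" if "Min X \<le> Min Y" using convex_X[OF \<open>Min Y \<in> S\<close> that] t by simp
  moreover have "Min X \<in> Y" if "Min Y \<le> Min X" using convex_Y[OF \<open>Min X \<in> S\<close> that] t by simp
  ultimately show False using \<open>Min X \<in> X\<close> \<open>Min Y \<in> Y\<close> assms(7) by (meson disjoint_iff linear)
qed

definition hand_parts :: "('a::linorder) tree \<Rightarrow> 'a set \<Rightarrow> 'a set set" where
  "hand_parts t F = (\<lambda>f. {f}) ` pseudofingers t F \<union> half_tendons t F"

lemma extended_hand_eq_hand_parts:
  "extended_hand t F = (\<lambda>X. (Min X, Max X)) ` hand_parts t F"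
  unfolding extended_hand_def hand_parts_def by (auto simp: image_Un image_image)

lemma hand_parts_nonempty: "X \<in> hand_parts t F \<Longrightarrow> X \<noteq> {}"
  by (auto simp: hand_parts_def half_tendons_def)

lemma half_tendonsE:
  assumes "h \<in> half_tendons t F"
  obtains x y b where "tendon_pair t F x y" "h = {z \<in> tendon t x y. (z < y) = b}"
proof -
  obtain x y where "tendon_pair t F x y"
    and "h = {z \<in> tendon t x y. z < y} \<or> h = {z \<in> tendon t x y. y < z}"
    using assms by (auto simp: half_tendons_def)
  moreover have "y < z \<longleftrightarrow> \<not> z < y" if "z \<in> tendon t x y" for z
    using that by (auto simp: tendon_def)
  ultimately show thesis using that by blast
qed

locale fingered_bst =
  fixes T :: "('a::linorder) tree" and F :: "'a set"
  assumes bst: "bst T" and fingers_subset: "F \<subseteq> set_tree T" and root_finger: "value T \<in> F"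
begin

abbreviation "S \<equiv> steiner T F"
abbreviation "PF \<equiv> pseudofingers T F"

lemma mem_steiner_iff: "z \<in> S \<longleftrightarrow> (\<exists>g\<in>F. anc T z g)"
proof
  assume "\<exists>g\<in>F. anc T z g"
  then obtain g where g: "g \<in> F" "anc T z g" by blast
  have "on_path T g (value T) z"
    unfolding on_path_def
    using g(2) anc_value[of z T] anc_in_set_tree[OF g(2)] anc_value_eq[OF bst] by auto
  then show "z \<in> S" unfolding steiner_def using g(1) root_finger by blast
qed (auto simp: steiner_def on_path_def)

lemma steiner_anc_closed: "z \<in> S \<Longrightarrow> anc T w z \<Longrightarrow> w \<in> S"
  using anc_trans[OF bst] by (meson mem_steiner_iff)

lemma steiner_subset: "S \<subseteq> set_tree T"
  using anc_in_set_tree by (fastforce simp: mem_steiner_iff)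

lemma pseudofingers_subset_steiner: "PF \<subseteq> S"
  using fingers_subset anc_refl by (fastforce simp: pseudofingers_def mem_steiner_iff)

lemma branching_node_in_pseudofingers:
  assumes "anc T x m" "x \<noteq> m" and "u \<in> S" "v \<in> S" "anc T m u" "anc T m v" "u \<noteq> m" "v \<noteq> m"
    and lca: "\<forall>w. anc T w u \<and> anc T w v \<longrightarrow> anc T w m"
  shows "m \<in> PF"
proof -
  have "m \<noteq> value T" using assms(1,2) anc_value_eq[OF bst, of x] by auto
  then obtain p where p: "(p, m) \<in> tedges T"
    using tedges_parent_exists[of m T] anc_in_set_tree[OF assms(1)] by auto
  obtain c1 where c1: "(m, c1) \<in> tedges T" "anc T c1 u"
    using tedges_child_towards[of T m u] assms(5,7) by auto
  obtain c2 where c2: "(m, c2) \<in> tedges T" "anc T c2 v"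
    using tedges_child_towards[of T m v] assms(6,8) by auto
  have "c1 \<noteq> c2"
  proof
    assume "c1 = c2"
    then have "anc T c1 m" using lca c1(2) c2(2) by blast
    then show False using tedges_anc[OF bst c1(1)] anc_antisym[OF bst] by blast
  qed
  have "m \<in> S" using steiner_anc_closed assms(3,5) .
  then have "p \<in> S" using steiner_anc_closed tedges_anc[OF bst p] by blast
  moreover have "c1 \<in> S" "c2 \<in> S" using steiner_anc_closed c1(2) c2(2) assms(3,4) by blast+
  ultimately have "deg_in T S m = 3"
    using deg_in_eq_3[OF bst p c1(1) c2(1) \<open>c1 \<noteq> c2\<close>] by simp
  then show ?thesis using \<open>m \<in> S\<close> by (simp add: pseudofingers_def)
qed

lemma tendon_disjoint_pseudofingers: "tendon_pair T F x y \<Longrightarrow> z \<in> tendon T x y \<Longrightarrow> z \<notin> PF"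
  unfolding tendon_pair_def by blast

lemma tendon_subset_steiner: "tendon_pair T F x y \<Longrightarrow> tendon T x y \<subseteq> S"
  using pseudofingers_subset_steiner steiner_anc_closed by (auto simp: tendon_pair_def tendon_def)

lemma tendon_pair_upper_unique:
  assumes "tendon_pair T F x1 y1" "tendon_pair T F x2 y2" "z \<in> tendon T x1 y1" "z \<in> tendon T x2 y2"
  shows "x1 = x2"
proof -
  have False if "tendon_pair T F a b" "tendon_pair T F a' b'" "z \<in> tendon T a b" "z \<in> tendon T a' b'"
    and "anc T a a'" "a \<noteq> a'" for a b a' b'
  proof -
    have "anc T a' z" "anc T z b" "z \<noteq> a'" "z \<noteq> b" using that(3,4) by (auto simp: tendon_def)
    then have "anc T a' b" "a' \<noteq> b" using anc_trans[OF bst] anc_antisym[OF bst] by blast+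
    then have "a' \<in> tendon T a b" using that(5,6) by (simp add: tendon_def)
    moreover have "a' \<in> PF" using that(2) by (simp add: tendon_pair_def)
    ultimately show False using tendon_disjoint_pseudofingers[OF that(1)] by blast
  qed
  moreover have "anc T x1 x2 \<or> anc T x2 x1"
    using assms(3,4) anc_linear[OF bst] by (auto simp: tendon_def)
  ultimately show ?thesis using assms by blast
qed

lemma tendon_pair_lower_unique:
  assumes "tendon_pair T F x y1" "tendon_pair T F x y2" "z \<in> tendon T x y1" "z \<in> tendon T x y2"
  shows "y1 = y2"
proof (rule ccontr)
  assume "y1 \<noteq> y2"
  have z: "anc T x z" "x \<noteq> z" "anc T z y1" "anc T z y2" using assms(3,4) by (auto simp: tendon_def)
  have y: "y1 \<in> PF" "y2 \<in> PF" using assms(1,2) by (auto simp: tendon_pair_def)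
  obtain m where m: "anc T m y1" "anc T m y2" "\<forall>w. anc T w y1 \<and> anc T w y2 \<longrightarrow> anc T w m"
    using anc_lca_exists[OF bst, of y1 y2] anc_in_set_tree[OF z(3)] anc_in_set_tree[OF z(4)] by blast
  have "anc T z m" using m(3) z(3,4) by blast
  then have xm: "anc T x m" "x \<noteq> m"
    using anc_trans[OF bst z(1)] anc_antisym[OF bst z(1)] z(2) by auto
  have "m \<in> PF"
  proof (cases "m = y1 \<or> m = y2")
    case False
    then show ?thesis
      using branching_node_in_pseudofingers[OF xm _ _ m(1,2) _ _ m(3)] y
        pseudofingers_subset_steiner by auto
  qed (use y in auto)
  moreover have "m \<in> tendon T x y1 \<or> m \<in> tendon T x y2"
    using xm m(1,2) \<open>y1 \<noteq> y2\<close> by (auto simp: tendon_def)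
  ultimately show False
    using tendon_disjoint_pseudofingers[OF assms(1)] tendon_disjoint_pseudofingers[OF assms(2)] by blast
qed

lemma tendon_convex:
  assumes pair: "tendon_pair T F x y" and "p \<in> tendon T x y" "q \<in> tendon T x y"
    and "s \<in> S" "p \<le> s" "s \<le> q" "\<not> anc T y s"
  shows "s \<in> tendon T x y"
proof -
  have s: "s \<in> set_tree T" using assms(4) steiner_subset by blast
  obtain u where u: "u \<in> tendon T x y" "anc T u s"
  proof -
    have "anc T p q \<or> anc T q p"
      using assms(2,3) anc_linear[OF bst] by (auto simp: tendon_def)
    then show thesis
    proof
      assume "anc T p q"
      then show thesis using that[OF assms(2)] anc_between[OF bst _ s] assms(5,6) by blast
    next
      assume "anc T q p"
      then show thesis using that[OF assms(3)] anc_between[OF bst _ s] assms(5,6) by blast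
    qed
  qed
  then have ux: "anc T x u" "u \<noteq> x" "anc T u y" by (auto simp: tendon_def)
  obtain w where w: "anc T w s" "anc T w y" "\<forall>w'. anc T w' s \<and> anc T w' y \<longrightarrow> anc T w' w"
    using anc_lca_exists[OF bst s, of y] anc_in_set_tree[OF ux(3)] by blast
  have "anc T u w" using w(3) u(2) ux(3) by blast
  then have xw: "anc T x w" "x \<noteq> w"
    using anc_trans[OF bst ux(1)] anc_antisym[OF bst ux(1)] ux(2) by auto
  have "w \<noteq> y" using w(1) assms(7) by blast
  then have "w \<in> tendon T x y" using xw w(2) by (simp add: tendon_def)
  then have "w \<notin> PF" using tendon_disjoint_pseudofingers[OF pair] by blast
  moreover have "y \<in> S" using pair pseudofingers_subset_steiner by (auto simp: tendon_pair_def)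
  ultimately have "w = s"
    using branching_node_in_pseudofingers[OF xw assms(4) \<open>y \<in> S\<close> w(1,2) _ \<open>w \<noteq> y\<close>[symmetric] w(3)]
    by blast
  then show ?thesis using \<open>w \<in> tendon T x y\<close> by simp
qed

lemma half_tendon_convex:
  assumes pair: "tendon_pair T F x y" and "p \<in> tendon T x y" "q \<in> tendon T x y"
    and "(p < y) = (q < y)" "s \<in> S" "p \<le> s" "s \<le> q"
  shows "s \<in> tendon T x y \<and> (s < y) = (p < y)"
proof -
  have pq: "anc T p y" "p \<noteq> y" "anc T q y" "q \<noteq> y" using assms(2,3) by (auto simp: tendon_def)
  have "\<not> anc T y s"
  proof
    assume ys: "anc T y s"
    have "(y < p) = (s < p)" "(y < q) = (s < q)"
      using anc_same_side[OF bst _ ys] pq by (metis (full_types))+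
    moreover have "s \<noteq> q" using ys pq(3,4) anc_antisym[OF bst] by blast
    ultimately show False using assms(4,6,7) pq(2) by auto
  qed
  then have "s \<in> tendon T x y" using tendon_convex[OF pair assms(2,3,5-7)] by blast
  moreover have "(s < y) = (p < y)" using assms(4,6,7) pq(2) by auto
  ultimately show ?thesis by blast
qed

lemma hand_parts_subset_steiner:
  assumes "X \<in> hand_parts T F"
  shows "X \<subseteq> S"
proof (cases "X \<in> half_tendons T F")
  case True
  then obtain x y b where "tendon_pair T F x y" "X = {z \<in> tendon T x y. (z < y) = b}"
    by (rule half_tendonsE)
  then show ?thesis using tendon_subset_steiner by blast
next
  case False
  then show ?thesis using assms pseudofingers_subset_steiner by (auto simp: hand_parts_def)
qed

lemma hand_parts_finite: "X \<in> hand_parts T F \<Longrightarrow> finite X"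
  using hand_parts_subset_steiner steiner_subset by (meson finite_set_tree finite_subset subset_trans)

lemma hand_part_convex:
  assumes X: "X \<in> hand_parts T F" and "s \<in> S" "Min X \<le> s" "s \<le> Max X"
  shows "s \<in> X"
proof (cases "X \<in> half_tendons T F")
  case True
  then obtain x y b where pair: "tendon_pair T F x y" and X_eq: "X = {z \<in> tendon T x y. (z < y) = b}"
    by (rule half_tendonsE)
  have "finite X" using X by (rule hand_parts_finite)
  then have "Min X \<in> X" "Max X \<in> X" using hand_parts_nonempty[OF X] by simp_all
  moreover have X_side: "X \<subseteq> tendon T x y" "\<And>z. z \<in> X \<Longrightarrow> (z < y) = b"
    using X_eq by auto
  ultimately have "s \<in> tendon T x y \<and> (s < y) = (Min X < y)"
    using half_tendon_convex[OF pair _ _ _ assms(2-4)] by auto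
  then show ?thesis using X_eq X_side(2)[OF \<open>Min X \<in> X\<close>] by simp
next
  case False
  then obtain f where "X = {f}" using X by (auto simp: hand_parts_def)
  then show ?thesis using assms(3,4) by simp
qed

lemma half_tendons_disjoint:
  assumes "X \<in> half_tendons T F" "Y \<in> half_tendons T F" "z \<in> X" "z \<in> Y"
  shows "X = Y"
proof -
  obtain x1 y1 b1 where 1: "tendon_pair T F x1 y1" "X = {z \<in> tendon T x1 y1. (z < y1) = b1}"
    using assms(1) by (rule half_tendonsE)
  obtain x2 y2 b2 where 2: "tendon_pair T F x2 y2" "Y = {z \<in> tendon T x2 y2. (z < y2) = b2}"
    using assms(2) by (rule half_tendonsE)
  have z: "z \<in> tendon T x1 y1" "z \<in> tendon T x2 y2" using assms(3,4) 1(2) 2(2) by auto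
  have "x1 = x2" using tendon_pair_upper_unique[OF 1(1) 2(1) z] .
  then have "y1 = y2" using tendon_pair_lower_unique[OF 1(1)] 2(1) z by blast
  then show "X = Y" using \<open>x1 = x2\<close> assms(3,4) 1(2) 2(2) by auto
qed

lemma hand_parts_disjoint:
  assumes "X \<in> hand_parts T F" "Y \<in> hand_parts T F" "X \<noteq> Y"
  shows "X \<inter> Y = {}"
proof -
  have not_pseudofinger: "z \<notin> PF" if h: "h \<in> half_tendons T F" and z: "z \<in> h" for h z
  proof -
    obtain x y b where "tendon_pair T F x y" "h = {z \<in> tendon T x y. (z < y) = b}"
      using h by (rule half_tendonsE)
    then show ?thesis using tendon_disjoint_pseudofingers z by blast
  qed
  show ?thesis
    using assms half_tendons_disjoint not_pseudofinger unfolding hand_parts_def by blast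
qed

lemma hand_parts_intervals_disjoint:
  assumes X: "X \<in> hand_parts T F" and Y: "Y \<in> hand_parts T F" and "X \<noteq> Y"
  shows "{Min X..Max X} \<inter> {Min Y..Max Y} = {}"
  using Min_Max_intervals_disjoint[OF
      hand_parts_finite[OF X] hand_parts_nonempty[OF X] hand_parts_subset_steiner[OF X]
      hand_parts_finite[OF Y] hand_parts_nonempty[OF Y] hand_parts_subset_steiner[OF Y]
      hand_parts_disjoint[OF assms] hand_part_convex[OF X] hand_part_convex[OF Y]] .

end

theorem lemma15:
  fixes T :: "('a::linorder) tree" and F :: "'a set"
  assumes "bst T" and "T \<noteq> Leaf"
    and "F \<subseteq> set_tree T" and "value T \<in> F"
  shows "\<forall>I\<in>extended_hand T F. \<forall>J\<in>extended_hand T F. I \<noteq> J \<longrightarrow>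
           {fst I..snd I} \<inter> {fst J..snd J} = {}"
proof (intro ballI impI)
  interpret fingered_bst T F using assms by unfold_locales
  fix I J assume "I \<in> extended_hand T F" "J \<in> extended_hand T F" "I \<noteq> J"
  then obtain X Y where "X \<in> hand_parts T F" "Y \<in> hand_parts T F" "X \<noteq> Y"
    and "I = (Min X, Max X)" "J = (Min Y, Max Y)"
    unfolding extended_hand_eq_hand_parts by blast
  then show "{fst I..snd I} \<inter> {fst J..snd J} = {}"
    using hand_parts_intervals_disjoint by simp
qed

end
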